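(* Let $G=(V,E)$ be a symmetric tree topology and let sets $R,S$ with $|R|=|S|=N/2$ be initially partitioned among the compute nodes, with $N_v$ the number of elements of $R$ and $S$ held by compute node $v$. Any algorithm computing the cartesian product $R\times S$ has (tuple) cost $\Omega(C_{LB})$, where \[C_{LB}=\max_{e\in E}\frac{1}{w_e}\cdot\min\Big\{\sum_{v\in V_e^-}N_v,\ \sum_{v\in V_e^+}N_v\Big\}.\]
   Context: Topology-aware model: the network is a directed graph $G=(V,E)$; each edge $e$ has bandwidth $w_e>0$; $V_C\subseteq V$ are the compute nodes (only they store data and compute; other nodes only route). $G$ is a symmetric tree topology: for every $(u,v)\in E$ also $(v,u)\in E$ with the same bandwidth, and the underlying undirected graph is a tree. The input is partitioned without duplication among the compute nodes; the algorithm knows the topology, bandwidths and local fragment sizes. Computation proceeds in synchronous rounds; in each round compute nodes compute locally and send data along paths. The tuple cost of round $i$ is $\max_e|Y_i(e)|/w_e$ where $|Y_i(e)|$ is the number of elements routed through edge $e$ in round $i$; the total cost is the sum over rounds. For an edge $e=(u,v)$, removing $e$ splits the compute nodes into $V_e^-$ (on $u$'s side) and $V_e^+$ (on $v$'s side). Computing $R\times S$ means every pair $(r,s)$ with $r\in R,s\in S$ is emitted by at least one compute node, which must hold both $r$ and $s$ at that time. *)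

theory Defs
  imports Complex_Main
begin

(* Vertices and data elements are represented by natural numbers.
   A directed edge is a pair of vertices. *)

type_synonym edge = "nat \<times> nat"

definition remove_edge :: "edge set \<Rightarrow> edge \<Rightarrow> edge set" where
  "remove_edge E e = E - {(fst e, snd e), (snd e, fst e)}"

(* Symmetric tree topology: finite nonempty vertex set, symmetric irreflexive
   edge relation, connected, and acyclic (every edge is a bridge). *)
definition sym_tree :: "nat set \<Rightarrow> edge set \<Rightarrow> bool" where
  "sym_tree V E \<longleftrightarrow> finite V \<and> V \<noteq> {} \<and> E \<subseteq> V \<times> V \<and> sym E \<and>
     (\<forall>v. (v, v) \<notin> E) \<and>
     (\<forall>x\<in>V. \<forall>y\<in>V. (x, y) \<in> E\<^sup>*) \<and>
     (\<forall>e\<in>E. e \<notin> (remove_edge E e)\<^sup>*)"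

definition Vminus :: "edge set \<Rightarrow> nat set \<Rightarrow> edge \<Rightarrow> nat set" where
  "Vminus E VC e = {x \<in> VC. (fst e, x) \<in> (remove_edge E e)\<^sup>*}"

definition Vplus :: "edge set \<Rightarrow> nat set \<Rightarrow> edge \<Rightarrow> nat set" where
  "Vplus E VC e = {x \<in> VC. (snd e, x) \<in> (remove_edge E e)\<^sup>*}"

definition input_partition :: "nat set \<Rightarrow> nat set \<Rightarrow> nat set \<Rightarrow> (nat \<Rightarrow> nat set) \<Rightarrow> bool" where
  "input_partition VC R S init \<longleftrightarrow>
     (\<forall>v. v \<notin> VC \<longrightarrow> init v = {}) \<and>
     (\<Union>v\<in>VC. init v) = R \<union> S \<and>
     (\<forall>u\<in>VC. \<forall>v\<in>VC. u \<noteq> v \<longrightarrow> init u \<inter> init v = {})"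

definition is_path :: "edge set \<Rightarrow> nat list \<Rightarrow> bool" where
  "is_path E p \<longleftrightarrow> p \<noteq> [] \<and> (\<forall>j. Suc j < length p \<longrightarrow> (p ! j, p ! Suc j) \<in> E)"

definition path_edges :: "nat list \<Rightarrow> edge set" where
  "path_edges p = {(p ! j, p ! Suc j) | j. Suc j < length p}"

(* An execution: sends i is the set of pairs (x, p): in round i element x is sent
   along path p (from hd p to last p).  Data held by node v at time i
   (after i rounds); nodes may keep everything they ever received. *)
fun hold :: "(nat \<Rightarrow> nat set) \<Rightarrow> (nat \<Rightarrow> (nat \<times> nat list) set) \<Rightarrow> nat \<Rightarrow> nat \<Rightarrow> nat set" where
  "hold init sends v 0 = init v"
| "hold init sends v (Suc i) =
     hold init sends v i \<union> {x. \<exists>p. (x, p) \<in> sends i \<and> last p = v}"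

definition valid_exec :: "edge set \<Rightarrow> nat set \<Rightarrow> (nat \<Rightarrow> nat set) \<Rightarrow> nat
    \<Rightarrow> (nat \<Rightarrow> (nat \<times> nat list) set) \<Rightarrow> bool" where
  "valid_exec E VC init k sends \<longleftrightarrow>
     (\<forall>i<k. \<forall>(x, p)\<in>sends i. is_path E p \<and> hd p \<in> VC \<and> last p \<in> VC \<and>
        x \<in> hold init sends (hd p) i) \<and>
     (\<forall>i\<ge>k. sends i = {})"

definition computes_product :: "nat set \<Rightarrow> (nat \<Rightarrow> nat set) \<Rightarrow> (nat \<Rightarrow> (nat \<times> nat list) set)
    \<Rightarrow> nat \<Rightarrow> nat set \<Rightarrow> nat set \<Rightarrow> bool" where
  "computes_product VC init sends k R S \<longleftrightarrow>
     (\<forall>r\<in>R. \<forall>s\<in>S. \<exists>v\<in>VC. \<exists>t\<le>k. r \<in> hold init sends v t \<and> s \<in> hold init sends v t)"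

definition routed :: "(nat \<Rightarrow> (nat \<times> nat list) set) \<Rightarrow> nat \<Rightarrow> edge \<Rightarrow> nat set" where
  "routed sends i e = {x. \<exists>p. (x, p) \<in> sends i \<and> e \<in> path_edges p}"

(* tuple cost: sum over rounds of max_e |Y_i(e)| / w_e  (0 inserted for E = {}) *)
definition tuple_cost :: "edge set \<Rightarrow> (edge \<Rightarrow> real) \<Rightarrow> (nat \<Rightarrow> (nat \<times> nat list) set) \<Rightarrow> nat \<Rightarrow> real" where
  "tuple_cost E w sends k =
     (\<Sum>i<k. Max (insert 0 ((\<lambda>e. real (card (routed sends i e)) / w e) ` E)))"

definition C_LB :: "edge set \<Rightarrow> (edge \<Rightarrow> real) \<Rightarrow> nat set \<Rightarrow> (nat \<Rightarrow> nat set) \<Rightarrow> real" where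
  "C_LB E w VC init =
     Max (insert 0 ((\<lambda>e. (1 / w e) *
        min (\<Sum>v\<in>Vminus E VC e. real (card (init v))) (\<Sum>v\<in>Vplus E VC e. real (card (init v)))) ` E))"

end

theory Submission
  imports Defs
begin

(* Fix an edge e = (u,v) and let X be the set of elements that are ever routed across e, in either
   direction.  An element outside X never leaves the component of G - e in which it starts, because
   every path avoiding e stays in that component and removing e disconnects the tree.  Hence an
   uncut pair (r,s) can only meet if r and s start on the same side.  With A and B the inputs of the
   two sides and |R| = |S|, this forces all of A, all of B, all of R or all of S into X, so
   min(|A|,|B|) <= |X|.  Each round routes at most 2 w_e times its cost across e (once per
   direction), so |X| / w_e <= 2 * cost, and taking the maximum over e gives cost >= C_LB / 2. *)

lemma rtrancl_remove_edge_cases: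
  assumes "(u, x) \<in> E\<^sup>*"
  shows "(u, x) \<in> (remove_edge E (u, v))\<^sup>* \<or> (v, x) \<in> (remove_edge E (u, v))\<^sup>*"
  using assms
proof (induction rule: rtrancl_induct)
  case base
  then show ?case by simp
next
  case (step y z)
  show ?case
  proof (cases "(y, z) \<in> {(u, v), (v, u)}")
    case True
    then show ?thesis by auto
  next
    case False
    with step have "(y, z) \<in> remove_edge E (u, v)"
      by (simp add: remove_edge_def)
    with step.IH show ?thesis
      by (meson rtrancl.rtrancl_into_rtrancl)
  qed
qed

lemma sym_tree_edge_sides_disjoint:
  assumes tree: "sym_tree V E" and uv: "(u, v) \<in> E"
    and "(u, y) \<in> (remove_edge E (u, v))\<^sup>*" and "(v, y) \<in> (remove_edge E (u, v))\<^sup>*"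
  shows False
proof -
  have "sym (remove_edge E (u, v))"
    using tree unfolding sym_tree_def remove_edge_def sym_def by blast
  then have "(y, v) \<in> (remove_edge E (u, v))\<^sup>*"
    using assms(4) by (meson sym_rtrancl symD)
  with assms(3) have "(u, v) \<in> (remove_edge E (u, v))\<^sup>*"
    by (meson rtrancl_trans)
  with tree uv show False
    unfolding sym_tree_def by fastforce
qed

lemma sym_tree_Vminus_Un_Vplus:
  assumes "sym_tree V E" and "(u, v) \<in> E" and "VC \<subseteq> V"
  shows "Vminus E VC (u, v) \<union> Vplus E VC (u, v) = VC"
proof -
  have "(u, z) \<in> E\<^sup>*" if "z \<in> VC" for z
    using assms that unfolding sym_tree_def by blast
  then show ?thesis
    unfolding Vminus_def Vplus_def using rtrancl_remove_edge_cases by fastforce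
qed

lemma sym_tree_Vminus_Int_Vplus:
  assumes "sym_tree V E" and "(u, v) \<in> E"
  shows "Vminus E VC (u, v) \<inter> Vplus E VC (u, v) = {}"
  unfolding Vminus_def Vplus_def using sym_tree_edge_sides_disjoint[OF assms] by auto

lemma is_path_rtrancl:
  assumes "is_path D p"
  shows "(hd p, last p) \<in> D\<^sup>*"
  using assms
proof (induction p)
  case Nil
  then show ?case by (simp add: is_path_def)
next
  case (Cons a p)
  show ?case
  proof (cases "p = []")
    case True
    then show ?thesis by simp
  next
    case False
    have "is_path D p"
      using Cons.prems False unfolding is_path_def by force
    with Cons.IH have "(hd p, last p) \<in> D\<^sup>*" by blast
    moreover have "(a, hd p) \<in> D"
      using Cons.prems False unfolding is_path_def by (force simp: hd_conv_nth)
    ultimately show ?thesis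
      using False by (simp add: converse_rtrancl_into_rtrancl)
  qed
qed

lemma is_path_remove_edge:
  assumes "is_path E p" and "(u, v) \<notin> path_edges p" and "(v, u) \<notin> path_edges p"
  shows "is_path (remove_edge E (u, v)) p"
  using assms unfolding is_path_def path_edges_def remove_edge_def by auto

lemma valid_exec_sendsD:
  assumes "valid_exec E VC init k sends" and "(x, p) \<in> sends i"
  shows "i < k" and "is_path E p" and "x \<in> hold init sends (hd p) i"
proof -
  show "i < k"
    using assms unfolding valid_exec_def by (metis empty_iff not_less)
  then show "is_path E p" and "x \<in> hold init sends (hd p) i"
    using assms unfolding valid_exec_def by fastforce+
qed

lemma hold_subset_UN_init:
  assumes "valid_exec E VC init k sends"
  shows "hold init sends y t \<subseteq> (\<Union>z. init z)"
proof (induction t arbitrary: y)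
  case 0
  then show ?case by auto
next
  case (Suc t)
  have "x \<in> (\<Union>z. init z)" if "(x, p) \<in> sends t" for x p
    using Suc.IH valid_exec_sendsD(3)[OF assms that] by blast
  with Suc.IH show ?case by auto
qed

lemma routed_subset_UN_init:
  assumes "valid_exec E VC init k sends"
  shows "routed sends i e \<subseteq> (\<Union>z. init z)"
proof
  fix x
  assume "x \<in> routed sends i e"
  then obtain p where "(x, p) \<in> sends i"
    unfolding routed_def by blast
  then show "x \<in> (\<Union>z. init z)"
    by (rule subsetD[OF hold_subset_UN_init[OF assms] valid_exec_sendsD(3)[OF assms]])
qed

lemma input_partition_owner_in_VC:
  assumes "input_partition VC R S init" and "x \<in> init z"
  shows "z \<in> VC"
  using assms unfolding input_partition_def by (metis empty_iff)

lemma input_partition_owner_unique: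
  assumes "input_partition VC R S init" and "x \<in> init z" and "x \<in> init z'"
  shows "z = z'"
proof -
  have "z \<in> VC" and "z' \<in> VC"
    using assms input_partition_owner_in_VC by blast+
  with assms show ?thesis
    unfolding input_partition_def by (metis disjoint_iff)
qed

lemma input_partition_UN_init:
  assumes "input_partition VC R S init"
  shows "(\<Union>z. init z) = R \<union> S"
proof -
  have "(\<Union>z. init z) = (\<Union>z\<in>VC. init z)"
    using input_partition_owner_in_VC[OF assms] by blast
  also have "\<dots> = R \<union> S"
    using assms unfolding input_partition_def by (elim conjE)
  finally show ?thesis .
qed

lemma sum_card_init_eq_card_UN:
  assumes "input_partition VC R S init" and "finite R" and "finite S" and "finite U"
  shows "(\<Sum>z\<in>U. real (card (init z))) = real (card (\<Union>z\<in>U. init z))"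
proof -
  have "finite (init z)" for z
    using assms(2,3) input_partition_UN_init[OF assms(1)] by (metis UN_upper UNIV_I finite_Un finite_subset)
  then have "card (\<Union>z\<in>U. init z) = (\<Sum>z\<in>U. card (init z))"
    using assms(4) input_partition_owner_unique[OF assms(1)] by (intro card_UN_disjoint) blast+
  then show ?thesis by simp
qed

lemma sym_tree_input_sides:
  assumes tree: "sym_tree V E" and uv: "(u, v) \<in> E" and VC: "VC \<subseteq> V"
    and ip: "input_partition VC R S init"
  shows "(\<Union>z\<in>Vminus E VC (u, v). init z) \<union> (\<Union>z\<in>Vplus E VC (u, v). init z) = R \<union> S"
    and "(\<Union>z\<in>Vminus E VC (u, v). init z) \<inter> (\<Union>z\<in>Vplus E VC (u, v). init z) = {}"
proof -
  have "(\<Union>z\<in>Vminus E VC (u, v). init z) \<union> (\<Union>z\<in>Vplus E VC (u, v). init z) = (\<Union>z\<in>VC. init z)"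
    by (simp only: UN_Un[symmetric] sym_tree_Vminus_Un_Vplus[OF tree uv VC])
  also have "\<dots> = R \<union> S"
    using ip unfolding input_partition_def by (elim conjE)
  finally show "(\<Union>z\<in>Vminus E VC (u, v). init z) \<union> (\<Union>z\<in>Vplus E VC (u, v). init z) = R \<union> S" .
  show "(\<Union>z\<in>Vminus E VC (u, v). init z) \<inter> (\<Union>z\<in>Vplus E VC (u, v). init z) = {}"
    using sym_tree_Vminus_Int_Vplus[OF tree uv, of VC] input_partition_owner_unique[OF ip] by blast
qed

definition crossing :: "(nat \<Rightarrow> (nat \<times> nat list) set) \<Rightarrow> nat \<Rightarrow> nat \<Rightarrow> nat \<Rightarrow> nat set" where
  "crossing sends k u v = (\<Union>i<k. routed sends i (u, v) \<union> routed sends i (v, u))"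

lemma finite_crossing:
  assumes "valid_exec E VC init k sends" and "input_partition VC R S init"
    and "finite R" and "finite S"
  shows "finite (crossing sends k u v)"
proof -
  have "crossing sends k u v \<subseteq> R \<union> S"
    using routed_subset_UN_init[OF assms(1)] input_partition_UN_init[OF assms(2)]
    unfolding crossing_def by blast
  then show ?thesis
    by (rule finite_subset[OF _ finite_UnI[OF assms(3,4)]])
qed

lemma hold_stays_on_side:
  assumes ve: "valid_exec E VC init k sends"
    and uncut: "x \<notin> crossing sends k u v"
    and origin: "\<And>z. x \<in> init z \<Longrightarrow> (a, z) \<in> (remove_edge E (u, v))\<^sup>*"
    and "x \<in> hold init sends y t"
  shows "(a, y) \<in> (remove_edge E (u, v))\<^sup>*"
  using assms(4)
proof (induction t arbitrary: y)
  case 0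
  then show ?case using origin by simp
next
  case (Suc t)
  show ?case
  proof (cases "x \<in> hold init sends y t")
    case True
    with Suc.IH show ?thesis .
  next
    case False
    with Suc.prems obtain p where p: "(x, p) \<in> sends t" "last p = y"
      by auto
    note sent = valid_exec_sendsD[OF ve p(1)]
    have "x \<notin> routed sends t (u, v)" and "x \<notin> routed sends t (v, u)"
      using uncut sent(1) unfolding crossing_def by auto
    then have "(u, v) \<notin> path_edges p" and "(v, u) \<notin> path_edges p"
      using p(1) unfolding routed_def by auto
    with sent(2) have "is_path (remove_edge E (u, v)) p"
      by (rule is_path_remove_edge)
    then have "(hd p, y) \<in> (remove_edge E (u, v))\<^sup>*"
      using is_path_rtrancl p(2) by blast
    moreover have "(a, hd p) \<in> (remove_edge E (u, v))\<^sup>*"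
      using Suc.IH sent(3) .
    ultimately show ?thesis
      by (meson rtrancl_trans)
  qed
qed

lemma uncut_element_side_iff:
  assumes tree: "sym_tree V E" and uv: "(u, v) \<in> E" and VC: "VC \<subseteq> V"
    and ip: "input_partition VC R S init" and ve: "valid_exec E VC init k sends"
    and uncut: "x \<notin> crossing sends k u v" and held: "x \<in> hold init sends y t"
  shows "x \<in> (\<Union>z\<in>Vminus E VC (u, v). init z) \<longleftrightarrow> (u, y) \<in> (remove_edge E (u, v))\<^sup>*"
proof -
  have reach: "(a, y) \<in> (remove_edge E (u, v))\<^sup>*"
    if "x \<in> init z" and "(a, z) \<in> (remove_edge E (u, v))\<^sup>*" for a z
  proof (rule hold_stays_on_side[OF ve uncut _ held])
    fix z'
    assume "x \<in> init z'"
    with that show "(a, z') \<in> (remove_edge E (u, v))\<^sup>*"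
      using input_partition_owner_unique[OF ip] by blast
  qed
  obtain z where z: "x \<in> init z"
    using subsetD[OF hold_subset_UN_init[OF ve] held] by blast
  then have z_side: "z \<in> Vminus E VC (u, v) \<union> Vplus E VC (u, v)"
    using input_partition_owner_in_VC[OF ip] sym_tree_Vminus_Un_Vplus[OF tree uv VC] by blast
  show ?thesis
  proof
    assume "x \<in> (\<Union>z\<in>Vminus E VC (u, v). init z)"
    then obtain z' where "z' \<in> Vminus E VC (u, v)" and "x \<in> init z'"
      by blast
    then show "(u, y) \<in> (remove_edge E (u, v))\<^sup>*"
      by (intro reach) (auto simp: Vminus_def)
  next
    assume u_side: "(u, y) \<in> (remove_edge E (u, v))\<^sup>*"
    have "(v, z) \<notin> (remove_edge E (u, v))\<^sup>*"
    proof
      assume "(v, z) \<in> (remove_edge E (u, v))\<^sup>*"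
      then have "(v, y) \<in> (remove_edge E (u, v))\<^sup>*"
        by (rule reach[OF z])
      then show False
        by (rule sym_tree_edge_sides_disjoint[OF tree uv u_side])
    qed
    with z_side have "z \<in> Vminus E VC (u, v)"
      by (auto simp: Vplus_def)
    with z show "x \<in> (\<Union>z\<in>Vminus E VC (u, v). init z)"
      by blast
  qed
qed

lemma min_card_le_card_cut:
  fixes A B R S X :: "'a set"
  assumes "finite R" and "finite S" and "R \<inter> S = {}" and "card R = card S"
    and AB: "A \<union> B = R \<union> S" "A \<inter> B = {}" and "finite X"
    and same_side: "\<And>r s. r \<in> R - X \<Longrightarrow> s \<in> S - X \<Longrightarrow> r \<in> A \<longleftrightarrow> s \<in> A"
  shows "min (card A) (card B) \<le> card X"
proof -
  have "finite A" and "finite B"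
    using assms(1,2) AB(1) by (metis finite_Un)+
  then have card_AB: "card A + card B = card R + card S"
    using assms(1-3) AB by (metis card_Un_disjoint)
  have "A \<subseteq> X \<or> B \<subseteq> X \<or> R \<subseteq> X \<or> S \<subseteq> X"
  proof (cases "R \<subseteq> X \<or> S \<subseteq> X")
    case False
    then obtain r s where rs: "r \<in> R - X" "s \<in> S - X"
      by blast
    have "x \<in> A \<longleftrightarrow> r \<in> A" if "x \<in> (R \<union> S) - X" for x
      using that same_side[OF rs(1)] same_side[OF _ rs(2)] same_side[OF rs] by blast
    with AB show ?thesis
      by (cases "r \<in> A") blast+
  qed blast
  then have "card A \<le> card X \<or> card B \<le> card X \<or> card R \<le> card X \<or> card S \<le> card X"
    using card_mono[OF \<open>finite X\<close>] by blast
  with card_AB \<open>card R = card S\<close> show ?thesis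
    by linarith
qed

lemma card_crossing_le_tuple_cost:
  fixes w :: "edge \<Rightarrow> real"
  assumes "finite E" and uv: "(u, v) \<in> E" and vu: "(v, u) \<in> E"
    and w_pos: "w (u, v) > 0" and w_sym: "w (v, u) = w (u, v)"
  shows "real (card (crossing sends k u v)) / w (u, v) \<le> 2 * tuple_cost E w sends k"
proof -
  let ?round_cost = "\<lambda>i. Max (insert 0 ((\<lambda>e. real (card (routed sends i e)) / w e) ` E))"
  let ?Y = "\<lambda>i e. real (card (routed sends i e))"
  have round: "?Y i e / w e \<le> ?round_cost i" if "e \<in> E" for i e
    using \<open>finite E\<close> that by (intro Max_ge finite.insertI finite_imageI insertI2 imageI)
  have "card (crossing sends k u v) \<le> (\<Sum>i<k. card (routed sends i (u, v) \<union> routed sends i (v, u)))"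
    unfolding crossing_def by (rule card_UN_le) simp
  also have "\<dots> \<le> (\<Sum>i<k. card (routed sends i (u, v)) + card (routed sends i (v, u)))"
    by (intro sum_mono card_Un_le)
  finally have "real (card (crossing sends k u v))
      \<le> real (\<Sum>i<k. card (routed sends i (u, v)) + card (routed sends i (v, u)))"
    by (rule of_nat_mono)
  then have "real (card (crossing sends k u v)) / w (u, v) \<le> (\<Sum>i<k. ?Y i (u, v) + ?Y i (v, u)) / w (u, v)"
    using w_pos by (intro divide_right_mono) auto
  also have "\<dots> = (\<Sum>i<k. ?Y i (u, v) / w (u, v) + ?Y i (v, u) / w (v, u))"
    using w_sym by (simp add: sum_divide_distrib add_divide_distrib)
  also have "\<dots> \<le> (\<Sum>i<k. 2 * ?round_cost i)"
  proof (rule sum_mono)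
    fix i
    show "?Y i (u, v) / w (u, v) + ?Y i (v, u) / w (v, u) \<le> 2 * ?round_cost i"
      using round[OF uv, of i] round[OF vu, of i] by linarith
  qed
  also have "\<dots> = 2 * tuple_cost E w sends k"
    unfolding tuple_cost_def by (simp add: sum_distrib_left)
  finally show ?thesis .
qed

lemma cut_bound_at_edge:
  fixes w :: "edge \<Rightarrow> real"
  assumes tree: "sym_tree V E" and uv: "(u, v) \<in> E" and VC: "VC \<subseteq> V"
    and w_pos: "w (u, v) > 0" and w_sym: "w (v, u) = w (u, v)"
    and R: "finite R" and S: "finite S" and RS: "R \<inter> S = {}" and card_RS: "card R = card S"
    and ip: "input_partition VC R S init" and ve: "valid_exec E VC init k sends"
    and cp: "computes_product VC init sends k R S"
  shows "(1 / w (u, v)) * min (\<Sum>z\<in>Vminus E VC (u, v). real (card (init z)))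
      (\<Sum>z\<in>Vplus E VC (u, v). real (card (init z))) \<le> 2 * tuple_cost E w sends k"
proof -
  let ?X = "crossing sends k u v"
  define A where "A = (\<Union>z\<in>Vminus E VC (u, v). init z)"
  define B where "B = (\<Union>z\<in>Vplus E VC (u, v). init z)"
  have "finite V" and "E \<subseteq> V \<times> V" and "sym E"
    using tree unfolding sym_tree_def by auto
  then have "finite E" and "(v, u) \<in> E" and "finite VC"
    using uv VC by (auto intro: finite_subset dest: symD)
  have AB: "A \<union> B = R \<union> S" "A \<inter> B = {}"
    unfolding A_def B_def using sym_tree_input_sides[OF tree uv VC ip] .
  have same_side: "r \<in> A \<longleftrightarrow> s \<in> A" if r: "r \<in> R - ?X" and s: "s \<in> S - ?X" for r s
  proof -
    obtain y t where held: "r \<in> hold init sends y t" "s \<in> hold init sends y t"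
      using cp r s unfolding computes_product_def by (meson DiffD1)
    have "r \<notin> ?X" and "s \<notin> ?X"
      using r s by simp_all
    then show ?thesis
      unfolding A_def
      by (simp only: uncut_element_side_iff[OF tree uv VC ip ve \<open>r \<notin> ?X\<close> held(1)]
          uncut_element_side_iff[OF tree uv VC ip ve \<open>s \<notin> ?X\<close> held(2)])
  qed
  have "finite (Vminus E VC (u, v))" and "finite (Vplus E VC (u, v))"
    using \<open>finite VC\<close> sym_tree_Vminus_Un_Vplus[OF tree uv VC] by (metis finite_Un)+
  then have sums: "(\<Sum>z\<in>Vminus E VC (u, v). real (card (init z))) = real (card A)"
      "(\<Sum>z\<in>Vplus E VC (u, v). real (card (init z))) = real (card B)"
    unfolding A_def B_def by (simp_all add: sum_card_init_eq_card_UN[OF ip R S])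
  have "min (card A) (card B) \<le> card ?X"
    by (rule min_card_le_card_cut[OF R S RS card_RS AB finite_crossing[OF ve ip R S] same_side])
  then have "min (real (card A)) (real (card B)) / w (u, v) \<le> real (card ?X) / w (u, v)"
    using w_pos by (intro divide_right_mono) auto
  also have "\<dots> \<le> 2 * tuple_cost E w sends k"
    by (rule card_crossing_le_tuple_cost[OF \<open>finite E\<close> uv \<open>(v, u) \<in> E\<close> w_pos w_sym])
  finally show ?thesis
    by (simp add: sums)
qed

theorem theorem3:
  shows "\<exists>c>0. \<forall>V E w VC R S init k sends.
     sym_tree V E \<and> (\<forall>e\<in>E. w e > 0) \<and> (\<forall>u v. (u, v) \<in> E \<longrightarrow> w (u, v) = w (v, u)) \<and>
     VC \<subseteq> V \<and> finite R \<and> finite S \<and> R \<inter> S = {} \<and> card R = card S \<and>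
     input_partition VC R S init \<and> valid_exec E VC init k sends \<and>
     computes_product VC init sends k R S
     \<longrightarrow> tuple_cost E w sends k \<ge> c * C_LB E w VC init"
proof (intro exI[of _ "1 / 2 :: real"] conjI allI impI)
  fix V :: "nat set" and E :: "edge set" and w :: "edge \<Rightarrow> real" and VC R S :: "nat set"
    and init :: "nat \<Rightarrow> nat set" and k :: nat and sends :: "nat \<Rightarrow> (nat \<times> nat list) set"
  assume H: "sym_tree V E \<and> (\<forall>e\<in>E. w e > 0) \<and> (\<forall>u v. (u, v) \<in> E \<longrightarrow> w (u, v) = w (v, u)) \<and>
     VC \<subseteq> V \<and> finite R \<and> finite S \<and> R \<inter> S = {} \<and> card R = card S \<and>
     input_partition VC R S init \<and> valid_exec E VC init k sends \<and>
     computes_product VC init sends k R S"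
  have "finite E"
    using H unfolding sym_tree_def by (meson finite_SigmaI finite_subset)
  have "0 \<le> tuple_cost E w sends k"
    unfolding tuple_cost_def using \<open>finite E\<close> by (intro sum_nonneg Max_ge) auto
  moreover have "(1 / w (u, v)) * min (\<Sum>z\<in>Vminus E VC (u, v). real (card (init z)))
      (\<Sum>z\<in>Vplus E VC (u, v). real (card (init z))) \<le> 2 * tuple_cost E w sends k"
    if "(u, v) \<in> E" for u v
    using cut_bound_at_edge[OF _ that] H that by metis
  ultimately have "C_LB E w VC init \<le> 2 * tuple_cost E w sends k"
    unfolding C_LB_def using \<open>finite E\<close> by (subst Max_le_iff) auto
  then show "1 / 2 * C_LB E w VC init \<le> tuple_cost E w sends k"
    by simp
qed simp

end
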